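(* Let $g\in H(\mathbb{D})$, let $\nu$ be a weight satisfying property (U) and let $\mu$ be a weight. Then the following are equivalent: (1) $S_g: H^{\infty}_\nu\rightarrow \mathcal{B}^{\infty}_\mu$ is bounded; (2) $\sup_{z\in\mathbb{D}}\frac{\mu(z)}{(1-|z|^2)\nu(z)}|g(z)|<\infty$. If, in addition, $\nu$ and $\mu$ are typical weights, then (1) and (2) are also equivalent to (3) $S_g: H^{0}_\nu\rightarrow \mathcal{B}^{0}_\mu$ is bounded.
   Context: $\mathbb{D}$ is the open unit disk and $H(\mathbb{D})$ the space of analytic functions on $\mathbb{D}$. A weight is a non-negative continuous function $\nu$ on $\mathbb{D}$ with $\nu(z)=\nu(|z|)$ for all $z$, which is decreasing in $|z|$. For a weight $\nu$: $H^{\infty}_\nu=\{f\in H(\mathbb{D}): \sup_{z}\nu(z)|f(z)|<\infty\}$, $H^{0}_\nu=\{f\in H(\mathbb{D}): \lim_{|z|\to1^-}\nu(z)|f(z)|=0\}$, $\mathcal{B}^{\infty}_\nu=\{f\in H(\mathbb{D}): |f(0)|+\sup_{z}\nu(z)|f'(z)|<\infty\}$, $\mathcal{B}^{0}_\nu=\{f\in H(\mathbb{D}): \lim_{|z|\to1^-}\nu(z)|f'(z)|=0\}$, each with its natural norm. A weight $\nu$ is typical if $\lim_{|z|\to1^-}\nu(z)=0$. A weight $\nu$ satisfies property (U) if there is $\alpha>0$ such that $r\mapsto \nu(r)/(1-r^2)^\alpha$ is almost increasing on $[0,1)$ (i.e. there is $C>0$ with $h(r)\le C h(s)$ whenever $r\le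 s$), equivalently $\inf_n \nu(1-2^{-(n+1)})/\nu(1-2^{-n})>0$. For $g\in H(\mathbb{D})$, $(S_gf)(z)=\int_0^z f'(\omega)g(\omega)\,d\omega$. *)

theory Defs
  imports "HOL-Complex_Analysis.Complex_Analysis"
begin

abbreviation disc :: "complex set" where "disc \<equiv> ball 0 1"

definition is_weight :: "(complex \<Rightarrow> real) \<Rightarrow> bool" where
  "is_weight \<nu> \<longleftrightarrow> continuous_on disc \<nu>
     \<and> (\<forall>z\<in>disc. 0 \<le> \<nu> z)
     \<and> (\<forall>z\<in>disc. \<nu> z = \<nu> (complex_of_real (norm z)))
     \<and> (\<forall>z\<in>disc. \<forall>w\<in>disc. norm z \<le> norm w \<longrightarrow> \<nu> w \<le> \<nu> z)"

definition radial_lim0 :: "(complex \<Rightarrow> real) \<Rightarrow> bool" where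
  "radial_lim0 h \<longleftrightarrow> (\<forall>\<epsilon>>0. \<exists>r<1. \<forall>z. r < norm z \<and> norm z < 1 \<longrightarrow> \<bar>h z\<bar> < \<epsilon>)"

definition typical_weight :: "(complex \<Rightarrow> real) \<Rightarrow> bool" where
  "typical_weight \<nu> \<longleftrightarrow> is_weight \<nu> \<and> radial_lim0 \<nu>"

definition property_U :: "(complex \<Rightarrow> real) \<Rightarrow> bool" where
  "property_U \<nu> \<longleftrightarrow> (\<exists>\<alpha>>0. \<exists>C>0. \<forall>r s. 0 \<le> r \<and> r \<le> s \<and> s < 1 \<longrightarrow>
      \<nu> (complex_of_real r) / (1 - r\<^sup>2) powr \<alpha> \<le> C * (\<nu> (complex_of_real s) / (1 - s\<^sup>2) powr \<alpha>))"

definition Hinf :: "(complex \<Rightarrow> real) \<Rightarrow> (complex \<Rightarrow> complex) set" where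
  "Hinf \<nu> = {f. f holomorphic_on disc \<and> bdd_above ((\<lambda>z. \<nu> z * norm (f z)) ` disc)}"

definition H0 :: "(complex \<Rightarrow> real) \<Rightarrow> (complex \<Rightarrow> complex) set" where
  "H0 \<nu> = {f. f holomorphic_on disc \<and> radial_lim0 (\<lambda>z. \<nu> z * norm (f z))}"

definition H_norm :: "(complex \<Rightarrow> real) \<Rightarrow> (complex \<Rightarrow> complex) \<Rightarrow> real" where
  "H_norm \<nu> f = (SUP z\<in>disc. \<nu> z * norm (f z))"

definition Binf :: "(complex \<Rightarrow> real) \<Rightarrow> (complex \<Rightarrow> complex) set" where
  "Binf \<mu> = {f. f holomorphic_on disc \<and> bdd_above ((\<lambda>z. \<mu> z * norm (deriv f z)) ` disc)}"

definition B0 :: "(complex \<Rightarrow> real) \<Rightarrow> (complex \<Rightarrow> complex) set" where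
  "B0 \<mu> = {f. f holomorphic_on disc \<and> radial_lim0 (\<lambda>z. \<mu> z * norm (deriv f z))}"

definition B_norm :: "(complex \<Rightarrow> real) \<Rightarrow> (complex \<Rightarrow> complex) \<Rightarrow> real" where
  "B_norm \<mu> f = norm (f 0) + (SUP z\<in>disc. \<mu> z * norm (deriv f z))"

definition S_op :: "(complex \<Rightarrow> complex) \<Rightarrow> (complex \<Rightarrow> complex) \<Rightarrow> complex \<Rightarrow> complex" where
  "S_op g f z = contour_integral (linepath 0 z) (\<lambda>w. deriv f w * g w)"

definition bounded_op ::
  "((complex \<Rightarrow> complex) \<Rightarrow> (complex \<Rightarrow> complex)) \<Rightarrow> (complex \<Rightarrow> complex) set \<Rightarrow> ((complex \<Rightarrow> complex) \<Rightarrow> real)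
   \<Rightarrow> (complex \<Rightarrow> complex) set \<Rightarrow> ((complex \<Rightarrow> complex) \<Rightarrow> real) \<Rightarrow> bool" where
  "bounded_op T X nX Y nY \<longleftrightarrow> (\<forall>f\<in>X. T f \<in> Y) \<and> (\<exists>C. \<forall>f\<in>X. nY (T f) \<le> C * nX f)"

end

theory Submission
  imports Defs
begin

text \<open>
  Since \<open>(S\<^sub>g f)' = f' g\<close>, boundedness of \<open>S\<^sub>g\<close> compares \<open>\<mu> |f'| |g|\<close> with \<open>\<nu> |f|\<close>
  pointwise. Property (U) makes \<open>\<nu>\<close> doubling: \<open>\<nu>(z) \<le> K \<nu>(w)\<close> whenever
  \<open>|w| \<le> (1 + |z|) / 2\<close>. Hence Cauchy's estimate on the circle of radius \<open>(1 - |z|) / 2\<close>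
  around \<open>z\<close> gives \<open>(1 - |z|) \<nu>(z) |f'(z)| \<le> 2 K sup \<nu> |f|\<close>, which yields sufficiency of the
  symbol condition, and the same local estimate preserves little-oh behaviour.

  For necessity we test with \<open>f\<^sub>a(z) = (1 - |a|\<^sup>2)\<^sup>\<beta> / (\<nu>(a) (1 - conj(a) z)\<^sup>\<beta>)\<close>, where
  \<open>\<beta> \<ge> \<alpha>\<close>: property (U) bounds \<open>\<nu> |f\<^sub>a|\<close> uniformly in \<open>a\<close>, while
  \<open>|f\<^sub>a'(a)| = \<beta> |a| / (\<nu>(a) (1 - |a|\<^sup>2))\<close>; near the origin \<open>f(z) = z\<close> suffices.
  For typical \<open>\<nu>\<close> the test functions are bounded and therefore lie in \<open>H\<^sup>0\<^sub>\<nu>\<close>.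
\<close>

lemma has_field_derivative_S_op:
  assumes f: "f holomorphic_on disc" and g: "g holomorphic_on disc" and z: "z \<in> disc"
  shows "(S_op g f has_field_derivative deriv f z * g z) (at z)"
proof -
  let ?h = "\<lambda>w. deriv f w * g w"
  have h: "?h holomorphic_on disc"
    by (intro holomorphic_intros f g) auto
  have "((\<lambda>x. contour_integral (linepath 0 x) ?h) has_field_derivative ?h z) (at z within disc)"
  proof (rule triangle_contour_integrals_convex_primitive)
    show "continuous_on disc ?h"
      using h holomorphic_on_imp_continuous_on by blast
    fix b c assume "b \<in> disc" "c \<in> disc"
    then have "convex hull {0, b, c} \<subseteq> disc"
      by (simp add: hull_minimal)
    then have "(?h has_contour_integral 0) (linepath 0 b +++ linepath b c +++ linepath c 0)"
      by (intro Cauchy_theorem_triangle holomorphic_on_subset[OF h])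
    then show "contour_integral (linepath 0 b) ?h + contour_integral (linepath b c) ?h +
               contour_integral (linepath c 0) ?h = 0"
      by (rule has_chain_integral_chain_integral3)
  qed (use z in simp_all)
  moreover have "at z within disc = at z"
    by (rule at_within_open[OF z]) simp
  moreover have "S_op g f = (\<lambda>x. contour_integral (linepath 0 x) ?h)"
    by (simp add: S_op_def[abs_def])
  ultimately show ?thesis
    by simp
qed

lemma holomorphic_on_S_op:
  "f holomorphic_on disc \<Longrightarrow> g holomorphic_on disc \<Longrightarrow> S_op g f holomorphic_on disc"
  using has_field_derivative_S_op
  by (meson field_differentiable_at_within field_differentiable_def holomorphic_on_def)

lemma deriv_S_op:
  "f holomorphic_on disc \<Longrightarrow> g holomorphic_on disc \<Longrightarrow> z \<in> disc \<Longrightarrow>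
    deriv (S_op g f) z = deriv f z * g z"
  using has_field_derivative_S_op DERIV_imp_deriv by blast

lemma S_op_at_0 [simp]: "S_op g f 0 = 0"
  by (simp add: S_op_def)

lemma weight_nonneg: "is_weight \<nu> \<Longrightarrow> z \<in> disc \<Longrightarrow> 0 \<le> \<nu> z"
  unfolding is_weight_def by blast

lemma weight_radial: "is_weight \<nu> \<Longrightarrow> z \<in> disc \<Longrightarrow> \<nu> z = \<nu> (complex_of_real (norm z))"
  unfolding is_weight_def by blast

lemma weight_antimono:
  "is_weight \<nu> \<Longrightarrow> z \<in> disc \<Longrightarrow> w \<in> disc \<Longrightarrow> norm z \<le> norm w \<Longrightarrow> \<nu> w \<le> \<nu> z"
  unfolding is_weight_def by blast

lemma weight_continuous_on: "is_weight \<nu> \<Longrightarrow> continuous_on disc \<nu>"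
  unfolding is_weight_def by blast

lemma weight_le_weight_0: "is_weight \<nu> \<Longrightarrow> z \<in> disc \<Longrightarrow> \<nu> z \<le> \<nu> 0"
  by (simp add: weight_antimono)

lemma radial_lim0_imp_bdd_above:
  assumes h: "continuous_on disc h" and lim: "radial_lim0 h"
  shows "bdd_above (h ` disc)"
proof -
  obtain r where r: "r < 1" and near: "\<And>z. r < norm z \<Longrightarrow> norm z < 1 \<Longrightarrow> \<bar>h z\<bar> < 1"
    using lim unfolding radial_lim0_def by (meson zero_less_one)
  have "compact (h ` cball 0 (max r 0))"
    using r by (intro compact_continuous_image continuous_on_subset[OF h]) auto
  then obtain b where b: "\<And>z. z \<in> cball 0 (max r 0) \<Longrightarrow> \<bar>h z\<bar> \<le> b"
    by (metis bounded_iff compact_imp_bounded image_eqI real_norm_def)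
  have "h z \<le> max b 1" if "z \<in> disc" for z
  proof (cases "norm z \<le> max r 0")
    case True
    then show ?thesis
      using b[of z] by auto
  next
    case False
    then have "\<bar>h z\<bar> < 1"
      using near[of z] that by simp
    then show ?thesis
      by linarith
  qed
  then show ?thesis
    by (intro bdd_aboveI2)
qed

lemma radial_lim0_mult_bounded:
  assumes lim: "radial_lim0 \<nu>" and nonneg: "\<forall>z\<in>disc. 0 \<le> \<nu> z"
    and bounded: "\<forall>z\<in>disc. norm (f z) \<le> Q"
  shows "radial_lim0 (\<lambda>z. \<nu> z * norm (f z))"
  unfolding radial_lim0_def
proof (intro allI impI)
  fix e :: real assume e: "e > 0"
  define Q' where "Q' = max Q 0 + 1"
  have Q': "Q' > 0"
    by (simp add: Q'_def add_nonneg_pos)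
  obtain r where r: "r < 1" and near: "\<forall>z. r < norm z \<and> norm z < 1 \<longrightarrow> \<bar>\<nu> z\<bar> < e / Q'"
    using lim e Q' unfolding radial_lim0_def by (meson divide_pos_pos)
  have "\<bar>\<nu> z * norm (f z)\<bar> < e" if z: "r < norm z" "norm z < 1" for z
  proof -
    have "z \<in> disc"
      using z by simp
    then have "0 \<le> \<nu> z" "\<nu> z < e / Q'" "norm (f z) \<le> Q'"
      using nonneg near bounded z by (force simp: Q'_def)+
    then have "\<nu> z * norm (f z) \<le> \<nu> z * Q'" and "\<nu> z * Q' < e"
      using Q' by (auto intro: mult_left_mono simp: pos_less_divide_eq)
    then show ?thesis
      by (simp add: \<open>0 \<le> \<nu> z\<close>)
  qed
  then show "\<exists>r<1. \<forall>z. r < norm z \<and> norm z < 1 \<longrightarrow> \<bar>\<nu> z * norm (f z)\<bar> < e"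
    using r by blast
qed

lemma H0_subset_Hinf:
  assumes "is_weight \<nu>"
  shows "H0 \<nu> \<subseteq> Hinf \<nu>"
proof
  fix f assume "f \<in> H0 \<nu>"
  then have f: "f holomorphic_on disc" and lim: "radial_lim0 (\<lambda>z. \<nu> z * norm (f z))"
    by (auto simp: H0_def)
  have "continuous_on disc (\<lambda>z. \<nu> z * norm (f z))"
    using weight_continuous_on[OF assms] holomorphic_on_imp_continuous_on[OF f]
    by (intro continuous_intros)
  then show "f \<in> Hinf \<nu>"
    using f lim radial_lim0_imp_bdd_above by (auto simp: Hinf_def)
qed

lemma B0_subset_Binf:
  assumes "is_weight \<mu>"
  shows "B0 \<mu> \<subseteq> Binf \<mu>"
proof
  fix h assume "h \<in> B0 \<mu>"
  then have h: "h holomorphic_on disc" and lim: "radial_lim0 (\<lambda>z. \<mu> z * norm (deriv h z))"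
    by (auto simp: B0_def)
  have "continuous_on disc (deriv h)"
    using h by (intro holomorphic_on_imp_continuous_on holomorphic_deriv) auto
  then have "continuous_on disc (\<lambda>z. \<mu> z * norm (deriv h z))"
    using weight_continuous_on[OF assms] by (intro continuous_intros)
  then show "h \<in> Binf \<mu>"
    using h lim radial_lim0_imp_bdd_above by (auto simp: Binf_def)
qed

lemma bounded_holomorphic_in_Hinf:
  assumes "is_weight \<nu>" "f holomorphic_on disc" "\<forall>z\<in>disc. norm (f z) \<le> Q"
  shows "f \<in> Hinf \<nu>"
proof -
  have "\<nu> z * norm (f z) \<le> \<nu> 0 * Q" if "z \<in> disc" for z
    using assms that by (intro mult_mono) (auto simp: weight_le_weight_0 weight_nonneg)
  then have "bdd_above ((\<lambda>z. \<nu> z * norm (f z)) ` disc)"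
    by (rule bdd_aboveI2)
  then show ?thesis
    using assms(2) by (simp add: Hinf_def)
qed

lemma bounded_holomorphic_in_H0:
  "is_weight \<nu> \<Longrightarrow> radial_lim0 \<nu> \<Longrightarrow> f holomorphic_on disc \<Longrightarrow> \<forall>z\<in>disc. norm (f z) \<le> Q \<Longrightarrow>
    f \<in> H0 \<nu>"
  by (simp add: H0_def radial_lim0_mult_bounded weight_nonneg)

lemma ident_in_Hinf: "is_weight \<nu> \<Longrightarrow> (\<lambda>z. z) \<in> Hinf \<nu>"
  by (rule bounded_holomorphic_in_Hinf[where Q = 1]) auto

lemma ident_in_H0: "is_weight \<nu> \<Longrightarrow> radial_lim0 \<nu> \<Longrightarrow> (\<lambda>z. z) \<in> H0 \<nu>"
  by (rule bounded_holomorphic_in_H0[where Q = 1]) auto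

lemma H_norm_upper: "f \<in> Hinf \<nu> \<Longrightarrow> z \<in> disc \<Longrightarrow> \<nu> z * norm (f z) \<le> H_norm \<nu> f"
  unfolding Hinf_def H_norm_def by (auto intro: cSUP_upper)

lemma H_norm_least: "(\<And>z. z \<in> disc \<Longrightarrow> \<nu> z * norm (f z) \<le> L) \<Longrightarrow> H_norm \<nu> f \<le> L"
  unfolding H_norm_def by (intro cSUP_least) auto

lemma B_norm_upper:
  assumes "h \<in> Binf \<mu>" "z \<in> disc"
  shows "\<mu> z * norm (deriv h z) \<le> B_norm \<mu> h"
proof -
  have "\<mu> z * norm (deriv h z) \<le> (SUP z\<in>disc. \<mu> z * norm (deriv h z))"
    using assms by (auto simp: Binf_def intro: cSUP_upper)
  then show ?thesis
    unfolding B_norm_def by (simp add: add_increasing)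
qed

lemma B_norm_S_op_least:
  "(\<And>z. z \<in> disc \<Longrightarrow> \<mu> z * norm (deriv (S_op g f) z) \<le> L) \<Longrightarrow> B_norm \<mu> (S_op g f) \<le> L"
  unfolding B_norm_def by (auto intro!: cSUP_least)

section \<open>Consequences of property (U)\<close>

lemma property_UE:
  assumes "property_U \<nu>"
  obtains \<alpha> C where "\<alpha> > 0" "C > 0"
    "\<And>r s. 0 \<le> r \<Longrightarrow> r \<le> s \<Longrightarrow> s < 1 \<Longrightarrow>
       \<nu> (complex_of_real r) \<le> C * \<nu> (complex_of_real s) * ((1 - r\<^sup>2) / (1 - s\<^sup>2)) powr \<alpha>"
proof -
  obtain \<alpha> C where \<alpha>: "\<alpha> > 0" and C: "C > 0" and U: "\<forall>r s. 0 \<le> r \<and> r \<le> s \<and> s < 1 \<longrightarrow>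
      \<nu> (complex_of_real r) / (1 - r\<^sup>2) powr \<alpha> \<le> C * (\<nu> (complex_of_real s) / (1 - s\<^sup>2) powr \<alpha>)"
    using assms unfolding property_U_def by blast
  have "\<nu> (complex_of_real r) \<le> C * \<nu> (complex_of_real s) * ((1 - r\<^sup>2) / (1 - s\<^sup>2)) powr \<alpha>"
    if rs: "0 \<le> r" "r \<le> s" "s < 1" for r s
  proof -
    have pos: "0 < 1 - r\<^sup>2" "0 < 1 - s\<^sup>2"
      using rs by (simp_all add: abs_square_less_1)
    have "\<nu> (complex_of_real r) / (1 - r\<^sup>2) powr \<alpha> \<le> C * (\<nu> (complex_of_real s) / (1 - s\<^sup>2) powr \<alpha>)"
      using U rs by blast
    moreover have "0 < (1 - r\<^sup>2) powr \<alpha>"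
      using pos by simp
    ultimately have "\<nu> (complex_of_real r) \<le> C * (\<nu> (complex_of_real s) / (1 - s\<^sup>2) powr \<alpha>) * (1 - r\<^sup>2) powr \<alpha>"
      by (simp add: pos_divide_le_eq)
    also have "\<dots> = C * \<nu> (complex_of_real s) * ((1 - r\<^sup>2) / (1 - s\<^sup>2)) powr \<alpha>"
      using pos by (simp add: powr_divide)
    finally show ?thesis .
  qed
  with \<alpha> C show thesis
    using that by blast
qed

lemma property_U_doubling:
  assumes \<nu>: "is_weight \<nu>" and "property_U \<nu>"
  obtains K where "K > 0"
    "\<And>z w. z \<in> disc \<Longrightarrow> w \<in> disc \<Longrightarrow> norm w \<le> (1 + norm z) / 2 \<Longrightarrow> \<nu> z \<le> K * \<nu> w"
proof -
  obtain \<alpha> C where \<alpha>: "\<alpha> > 0" and C: "C > 0" and U: "\<And>r s. 0 \<le> r \<Longrightarrow> r \<le> s \<Longrightarrow> s < 1 \<Longrightarrow>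
      \<nu> (complex_of_real r) \<le> C * \<nu> (complex_of_real s) * ((1 - r\<^sup>2) / (1 - s\<^sup>2)) powr \<alpha>"
    using property_UE[OF assms(2)] by blast
  have "\<nu> z \<le> C * 2 powr \<alpha> * \<nu> w"
    if z: "z \<in> disc" and w: "w \<in> disc" and zw: "norm w \<le> (1 + norm z) / 2" for z w
  proof -
    define s where "s = (1 + norm z) / 2"
    have s: "norm z \<le> s" "s < 1" "0 \<le> s"
      using z by (auto simp: s_def)
    have pos: "0 < 1 - s\<^sup>2" "0 \<le> 1 - (norm z)\<^sup>2" "0 \<le> \<nu> (complex_of_real s)"
      using s weight_nonneg[OF \<nu>, of "complex_of_real s"] by (auto simp: abs_square_less_1 abs_square_le_1)
    have "1 - (norm z)\<^sup>2 = (1 - norm z) * (1 + norm z)"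
      by (simp add: power2_eq_square algebra_simps)
    also have "\<dots> \<le> (1 - norm z) * (1 + s)"
      using s z by (intro mult_left_mono) auto
    also have "\<dots> = 2 * (1 - s\<^sup>2)"
      by (simp add: s_def power2_eq_square field_simps)
    finally have ratio: "(1 - (norm z)\<^sup>2) / (1 - s\<^sup>2) \<le> 2"
      using pos by (simp add: divide_le_eq)
    have "norm w \<le> s"
      using zw by (simp add: s_def)
    then have s_w: "\<nu> (complex_of_real s) \<le> \<nu> w"
      using weight_antimono[OF \<nu> w, of "complex_of_real s"] s by simp
    have "\<nu> z \<le> C * \<nu> (complex_of_real s) * ((1 - (norm z)\<^sup>2) / (1 - s\<^sup>2)) powr \<alpha>"
      using U[of "norm z" s] s weight_radial[OF \<nu> z] by simp
    also have "\<dots> \<le> C * \<nu> (complex_of_real s) * 2 powr \<alpha>"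
      using C \<alpha> pos ratio by (intro mult_left_mono powr_mono2) auto
    also have "\<dots> \<le> C * 2 powr \<alpha> * \<nu> w"
      using C s_w by (simp add: mult_ac)
    finally show ?thesis .
  qed
  then show thesis
    using that[of "C * 2 powr \<alpha>"] C by auto
qed

section \<open>Test functions\<close>

definition test_fun :: "(complex \<Rightarrow> real) \<Rightarrow> nat \<Rightarrow> complex \<Rightarrow> complex \<Rightarrow> complex" where
  "test_fun \<nu> \<beta> a z = complex_of_real ((1 - (norm a)\<^sup>2) ^ \<beta> / \<nu> a) / (1 - cnj a * z) ^ \<beta>"

lemma norm_one_minus_cnj_mult_ge:
  assumes "a \<in> disc" "z \<in> disc"
  shows "1 - min (norm a) (norm z) \<le> norm (1 - cnj a * z)"
proof -
  have "norm a * norm z \<le> min (norm a) (norm z)"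
    using assms by (auto intro: mult_left_le mult_left_le_one_le less_imp_le)
  moreover have "1 - norm a * norm z \<le> norm (1 - cnj a * z)"
    using norm_triangle_ineq2[of 1 "cnj a * z"] by (simp add: norm_mult)
  ultimately show ?thesis
    by linarith
qed

lemma one_minus_cnj_mult_nonzero: "a \<in> disc \<Longrightarrow> z \<in> disc \<Longrightarrow> 1 - cnj a * z \<noteq> 0"
  using norm_one_minus_cnj_mult_ge[of a z] by auto

lemma test_fun_quotient_le:
  assumes a: "a \<in> disc" and z: "z \<in> disc"
  shows "(1 - (norm a)\<^sup>2) / norm (1 - cnj a * z)
           \<le> 2 * ((1 - (norm a)\<^sup>2) / (1 - (min (norm a) (norm z))\<^sup>2))"
proof -
  define m where "m = min (norm a) (norm z)"
  have m: "0 \<le> m" "m < 1" "m \<le> norm a"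
    using a z by (auto simp: m_def)
  have "1 - m\<^sup>2 = (1 - m) * (1 + m)"
    by (simp add: power2_eq_square algebra_simps)
  also have "\<dots> \<le> (1 - m) * 2"
    using m by (intro mult_left_mono) auto
  also have "1 - m \<le> norm (1 - cnj a * z)"
    using norm_one_minus_cnj_mult_ge[OF a z] by (simp add: m_def)
  finally have "(1 - m\<^sup>2) / 2 \<le> norm (1 - cnj a * z)"
    by simp
  moreover have "0 < 1 - m\<^sup>2" "0 \<le> 1 - (norm a)\<^sup>2"
    using m a by (auto simp: abs_square_less_1 abs_square_le_1)
  ultimately have "(1 - (norm a)\<^sup>2) / norm (1 - cnj a * z) \<le> (1 - (norm a)\<^sup>2) / ((1 - m\<^sup>2) / 2)"
    by (intro frac_le) auto
  also have "\<dots> = 2 * ((1 - (norm a)\<^sup>2) / (1 - m\<^sup>2))"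
    by simp
  finally show ?thesis
    by (simp add: m_def)
qed

lemma norm_test_fun:
  assumes "a \<in> disc" "\<nu> a > 0"
  shows "norm (test_fun \<nu> \<beta> a z) = ((1 - (norm a)\<^sup>2) / norm (1 - cnj a * z)) ^ \<beta> / \<nu> a"
proof -
  have "0 \<le> 1 - (norm a)\<^sup>2"
    using assms by (simp add: abs_square_le_1)
  then have "norm (complex_of_real ((1 - (norm a)\<^sup>2) ^ \<beta> / \<nu> a)) = (1 - (norm a)\<^sup>2) ^ \<beta> / \<nu> a"
    using assms by (simp only: norm_of_real) simp
  then show ?thesis
    by (simp only: test_fun_def norm_divide norm_power) (simp add: power_divide)
qed

lemma test_fun_bounded:
  assumes a: "a \<in> disc" and "\<nu> a > 0" and z: "z \<in> disc"
  shows "norm (test_fun \<nu> \<beta> a z) \<le> 2 ^ \<beta> / \<nu> a"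
proof -
  have "1 - (norm a)\<^sup>2 \<le> 1 - (min (norm a) (norm z))\<^sup>2"
    using a z by (auto intro: power_mono)
  moreover have "0 < 1 - (min (norm a) (norm z))\<^sup>2" "0 \<le> 1 - (norm a)\<^sup>2"
    using a z by (auto simp: abs_square_less_1 abs_square_le_1)
  ultimately have "(1 - (norm a)\<^sup>2) / (1 - (min (norm a) (norm z))\<^sup>2) \<le> 1"
    by simp
  then have "(1 - (norm a)\<^sup>2) / norm (1 - cnj a * z) \<le> 2"
    using test_fun_quotient_le[OF a z] by linarith
  moreover have "0 \<le> (1 - (norm a)\<^sup>2) / norm (1 - cnj a * z)"
    using \<open>0 \<le> 1 - (norm a)\<^sup>2\<close> by simp
  ultimately show ?thesis
    using assms by (auto simp: norm_test_fun intro!: divide_right_mono power_mono)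
qed

lemma test_fun_holomorphic:
  assumes "a \<in> disc"
  shows "test_fun \<nu> \<beta> a holomorphic_on disc"
proof -
  have "(1 - cnj a * z) ^ \<beta> \<noteq> 0" if "z \<in> disc" for z
    using one_minus_cnj_mult_nonzero[OF assms that] by simp
  then show ?thesis
    unfolding test_fun_def[abs_def] by (intro holomorphic_intros)
qed

lemma has_field_derivative_test_fun:
  assumes "1 - cnj a * z \<noteq> 0"
  shows "(test_fun \<nu> \<beta> a has_field_derivative
           complex_of_real ((1 - (norm a)\<^sup>2) ^ \<beta> / \<nu> a) * of_nat \<beta> * cnj a / (1 - cnj a * z) ^ Suc \<beta>)
         (at z)"
proof -
  define c where "c = complex_of_real ((1 - (norm a)\<^sup>2) ^ \<beta> / \<nu> a)"
  define w where "w = 1 - cnj a * z"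
  have "test_fun \<nu> \<beta> a = (\<lambda>z. c / (1 - cnj a * z) ^ \<beta>)"
    by (simp add: test_fun_def[abs_def] c_def)
  moreover have "((\<lambda>z. c / (1 - cnj a * z) ^ \<beta>) has_field_derivative
          - (c * (of_nat \<beta> * w ^ (\<beta> - 1) * (- cnj a))) / (w ^ \<beta>)\<^sup>2) (at z)"
    unfolding w_def using assms by (auto intro!: derivative_eq_intros simp: power2_eq_square)
  moreover have "- (c * (of_nat \<beta> * w ^ (\<beta> - 1) * (- cnj a))) / (w ^ \<beta>)\<^sup>2
                   = c * of_nat \<beta> * cnj a / w ^ Suc \<beta>"
  proof (cases \<beta>)
    case (Suc n)
    have "(w ^ \<beta>)\<^sup>2 = w ^ (\<beta> - 1) * w ^ Suc \<beta>"
      by (simp add: Suc power2_eq_square)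
    moreover have "w \<noteq> 0"
      using assms by (simp add: w_def)
    ultimately show ?thesis
      by (simp add: field_simps)
  qed simp
  ultimately show ?thesis
    by (simp add: c_def w_def)
qed

lemma norm_deriv_test_fun_at_center:
  assumes a: "a \<in> disc" and "\<nu> a > 0"
  shows "norm (deriv (test_fun \<nu> \<beta> a) a) = \<beta> * norm a / (\<nu> a * (1 - (norm a)\<^sup>2))"
proof -
  define t where "t = 1 - (norm a)\<^sup>2"
  have t: "t > 0"
    using a by (simp add: t_def abs_square_less_1)
  have "cnj a * a = complex_of_real ((norm a)\<^sup>2)"
    by (metis complex_norm_square mult.commute)
  then have "1 - cnj a * a = complex_of_real t"
    by (simp only: t_def of_real_diff of_real_1)
  moreover have "1 - cnj a * a \<noteq> 0"
    using one_minus_cnj_mult_nonzero[OF a a] .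
  ultimately have "deriv (test_fun \<nu> \<beta> a) a
               = complex_of_real (t ^ \<beta> / \<nu> a) * of_nat \<beta> * cnj a / complex_of_real t ^ Suc \<beta>"
    using DERIV_imp_deriv[OF has_field_derivative_test_fun] by (simp add: t_def)
  then have "norm (deriv (test_fun \<nu> \<beta> a) a) = t ^ \<beta> / \<nu> a * \<beta> * norm a / t ^ Suc \<beta>"
    using t assms by (simp add: norm_mult norm_divide norm_power)
  also have "\<dots> = \<beta> * norm a / (\<nu> a * t)"
    using t assms by (simp add: field_simps)
  finally show ?thesis
    by (simp add: t_def)
qed

lemma test_fun_in_Hinf:
  assumes "is_weight \<nu>" "a \<in> disc" "\<nu> a > 0"
  shows "test_fun \<nu> \<beta> a \<in> Hinf \<nu>"
  by (rule bounded_holomorphic_in_Hinf[where Q = "2 ^ \<beta> / \<nu> a"])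
    (use assms test_fun_bounded test_fun_holomorphic in auto)

lemma test_fun_in_H0:
  assumes "is_weight \<nu>" "radial_lim0 \<nu>" "a \<in> disc" "\<nu> a > 0"
  shows "test_fun \<nu> \<beta> a \<in> H0 \<nu>"
  by (rule bounded_holomorphic_in_H0[where Q = "2 ^ \<beta> / \<nu> a"])
    (use assms test_fun_bounded test_fun_holomorphic in auto)

lemma test_fun_weighted_bound:
  assumes \<nu>: "is_weight \<nu>" and \<nu>_pos: "\<forall>z\<in>disc. \<nu> z > 0" and "property_U \<nu>"
  obtains \<beta> L where "\<beta> > 0" "\<And>a z. a \<in> disc \<Longrightarrow> z \<in> disc \<Longrightarrow> \<nu> z * norm (test_fun \<nu> \<beta> a z) \<le> L"
proof -
  obtain \<alpha> C where \<alpha>: "\<alpha> > 0" and C: "C > 0" and U: "\<And>r s. 0 \<le> r \<Longrightarrow> r \<le> s \<Longrightarrow> s < 1 \<Longrightarrow>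
      \<nu> (complex_of_real r) \<le> C * \<nu> (complex_of_real s) * ((1 - r\<^sup>2) / (1 - s\<^sup>2)) powr \<alpha>"
    using property_UE[OF assms(3)] by blast
  define \<beta> where "\<beta> = nat \<lceil>\<alpha>\<rceil>"
  have \<beta>: "0 < \<beta>" "\<alpha> \<le> real \<beta>"
    using \<alpha> real_nat_ceiling_ge[of \<alpha>] by (auto simp: \<beta>_def)
  have "\<nu> z * norm (test_fun \<nu> \<beta> a z) \<le> C * 2 ^ \<beta>" if a: "a \<in> disc" and z: "z \<in> disc" for a z
  proof -
    define m where "m = min (norm a) (norm z)"
    define t where "t = (1 - (norm a)\<^sup>2) / (1 - m\<^sup>2)"
    define q where "q = (1 - (norm a)\<^sup>2) / norm (1 - cnj a * z)"
    have m: "0 \<le> m" "m \<le> norm a" "m \<le> norm z" "norm a < 1"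
      using a by (auto simp: m_def)
    have pos: "0 < 1 - (norm a)\<^sup>2" "0 < 1 - m\<^sup>2" "\<nu> a > 0"
      using m \<nu>_pos a by (auto simp: abs_square_less_1)
    have t: "0 < t" "t \<le> 1"
      using pos m by (auto simp: t_def power_mono)
    have q: "0 \<le> q" "q \<le> 2 * t"
      using test_fun_quotient_le[OF a z] pos by (auto simp: q_def t_def m_def)
    have "\<nu> z \<le> \<nu> (complex_of_real m)"
      using weight_antimono[OF \<nu>, of "complex_of_real m" z] m z by simp
    also have "\<dots> \<le> C * \<nu> a * ((1 - m\<^sup>2) / (1 - (norm a)\<^sup>2)) powr \<alpha>"
      using U[of m "norm a"] m weight_radial[OF \<nu> a] by simp
    also have "(1 - m\<^sup>2) / (1 - (norm a)\<^sup>2) = 1 / t"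
      by (simp add: t_def)
    finally have ratio: "\<nu> z / \<nu> a \<le> C * (1 / t) powr \<alpha>"
      using pos by (simp add: divide_le_eq mult_ac)
    have "\<nu> z * norm (test_fun \<nu> \<beta> a z) = \<nu> z / \<nu> a * q ^ \<beta>"
      using norm_test_fun[of a \<nu>] a pos by (simp add: q_def)
    also have "\<dots> \<le> C * (1 / t) powr \<alpha> * (2 * t) ^ \<beta>"
      using ratio q pos C weight_nonneg[OF \<nu> z] by (intro mult_mono power_mono) auto
    also have "\<dots> = C * 2 ^ \<beta> * t powr (real \<beta> - \<alpha>)"
      using t by (simp add: powr_diff powr_realpow powr_divide power_mult_distrib mult_ac)
    also have "\<dots> \<le> C * 2 ^ \<beta>"
      using t \<beta> C by (intro mult_left_le powr_le1) auto
    finally show ?thesis .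
  qed
  then show thesis
    using that \<beta>(1) by blast
qed

section \<open>Sufficiency of the symbol condition\<close>

lemma dist_Cauchy_circle:
  assumes z: "z \<in> disc" and w: "dist z w = (1 - norm z) / 2"
  shows "w \<in> disc" "norm w \<le> (1 + norm z) / 2" "(3 * norm z - 1) / 2 \<le> norm w"
proof -
  have "norm w \<le> norm z + norm (w - z)" "norm z \<le> norm w + norm (z - w)"
    by (rule norm_triangle_sub)+
  then show "norm w \<le> (1 + norm z) / 2" "(3 * norm z - 1) / 2 \<le> norm w"
    using w by (auto simp: dist_norm norm_minus_commute)
  then show "w \<in> disc"
    using z by simp
qed

lemma weighted_Cauchy_estimate:
  assumes z: "z \<in> disc" and \<nu>_z: "\<nu> z > 0"
    and doubling: "\<And>w. w \<in> disc \<Longrightarrow> norm w \<le> (1 + norm z) / 2 \<Longrightarrow> \<nu> z \<le> K * \<nu> w"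
    and f: "f holomorphic_on disc"
    and N: "\<And>w. dist z w = (1 - norm z) / 2 \<Longrightarrow> \<nu> w * norm (f w) \<le> N"
  shows "(1 - norm z) * \<nu> z * norm (deriv f z) \<le> 2 * K * N"
proof -
  define \<rho> where "\<rho> = (1 - norm z) / 2"
  have \<rho>: "\<rho> > 0"
    using z by (simp add: \<rho>_def)
  have "K \<ge> 1"
    using doubling[OF z] z \<nu>_z by simp
  have sub: "cball z \<rho> \<subseteq> disc"
  proof
    fix w assume "w \<in> cball z \<rho>"
    moreover have "norm w \<le> norm z + norm (w - z)"
      by (rule norm_triangle_sub)
    ultimately show "w \<in> disc"
      using z by (auto simp: \<rho>_def dist_norm norm_minus_commute)
  qed
  have "norm (f w) \<le> K * N / \<nu> z" if "norm (z - w) = \<rho>" for w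
  proof -
    have circle: "dist z w = (1 - norm z) / 2"
      using that by (simp add: dist_norm \<rho>_def)
    have "\<nu> z * norm (f w) \<le> K * \<nu> w * norm (f w)"
      using doubling dist_Cauchy_circle[OF z circle] by (simp add: mult_right_mono)
    also have "\<dots> \<le> K * N"
      using N[OF circle] \<open>K \<ge> 1\<close> by (simp add: mult.assoc)
    finally show ?thesis
      using \<nu>_z by (simp add: le_divide_eq mult.commute)
  qed
  moreover have "f holomorphic_on ball z \<rho>" "continuous_on (cball z \<rho>) f"
    using f sub ball_subset_cball holomorphic_on_imp_continuous_on
    by (blast intro: holomorphic_on_subset)+
  ultimately have "norm ((deriv ^^ 1) f z) \<le> fact 1 * (K * N / \<nu> z) / \<rho> ^ 1"
    using \<rho> by (intro Cauchy_inequality) auto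
  then show ?thesis
    using \<rho> \<nu>_z by (simp add: \<rho>_def field_simps)
qed

lemma S_op_weighted_deriv_le:
  assumes g: "g holomorphic_on disc" and f: "f holomorphic_on disc" and z: "z \<in> disc"
    and "\<nu> z > 0" "\<mu> z \<ge> 0"
    and B: "\<mu> z / ((1 - (norm z)\<^sup>2) * \<nu> z) * norm (g z) \<le> B"
    and L: "(1 - norm z) * \<nu> z * norm (deriv f z) \<le> L"
  shows "\<mu> z * norm (deriv (S_op g f) z) \<le> 2 * B * L"
proof -
  define P where "P = (1 - (norm z)\<^sup>2) * \<nu> z"
  have P: "P > 0"
    using assms by (simp add: P_def abs_square_less_1)
  have "1 - (norm z)\<^sup>2 = (1 - norm z) * (1 + norm z)"
    by (simp add: power2_eq_square algebra_simps)
  also have "\<dots> \<le> (1 - norm z) * 2"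
    using z by (intro mult_left_mono) auto
  finally have "1 - (norm z)\<^sup>2 \<le> (1 - norm z) * 2" .
  then have "(1 - (norm z)\<^sup>2) * (\<nu> z * norm (deriv f z)) \<le> ((1 - norm z) * 2) * (\<nu> z * norm (deriv f z))"
    using assms by (intro mult_right_mono) auto
  then have "P * norm (deriv f z) \<le> 2 * ((1 - norm z) * \<nu> z * norm (deriv f z))"
    unfolding P_def by (simp only: mult_ac)
  also have "\<dots> \<le> 2 * L"
    using L by simp
  finally have derivative: "P * norm (deriv f z) \<le> 2 * L" .
  have "\<mu> z * norm (deriv (S_op g f) z) = (\<mu> z / P * norm (g z)) * (P * norm (deriv f z))"
    using P by (simp add: deriv_S_op[OF f g z] norm_mult)
  also have "\<dots> \<le> B * (2 * L)"
  proof (rule mult_mono)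
    have "0 \<le> \<mu> z / P * norm (g z)"
      using P assms by simp
    then show "0 \<le> B"
      using B by (simp add: P_def)
  qed (use B derivative P in \<open>auto simp: P_def\<close>)
  finally show ?thesis
    by simp
qed

context
  fixes \<nu> \<mu> :: "complex \<Rightarrow> real" and g :: "complex \<Rightarrow> complex" and K B :: real
  assumes \<nu>: "is_weight \<nu>" and \<nu>_pos: "\<forall>z\<in>disc. \<nu> z > 0" and \<mu>: "is_weight \<mu>"
    and g: "g holomorphic_on disc"
    and doubling: "\<And>z w. z \<in> disc \<Longrightarrow> w \<in> disc \<Longrightarrow> norm w \<le> (1 + norm z) / 2 \<Longrightarrow> \<nu> z \<le> K * \<nu> w"
    and bound: "\<And>z. z \<in> disc \<Longrightarrow> \<mu> z / ((1 - (norm z)\<^sup>2) * \<nu> z) * norm (g z) \<le> B"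
begin

lemma S_op_weighted_deriv_bound:
  assumes f: "f holomorphic_on disc" and z: "z \<in> disc"
    and N: "\<And>w. dist z w = (1 - norm z) / 2 \<Longrightarrow> \<nu> w * norm (f w) \<le> N"
  shows "\<mu> z * norm (deriv (S_op g f) z) \<le> 4 * B * K * N"
proof -
  have "(1 - norm z) * \<nu> z * norm (deriv f z) \<le> 2 * K * N"
    using \<nu>_pos z by (intro weighted_Cauchy_estimate[OF z _ doubling f N]) auto
  then have "\<mu> z * norm (deriv (S_op g f) z) \<le> 2 * B * (2 * K * N)"
    using \<nu>_pos z weight_nonneg[OF \<mu> z] bound[OF z]
    by (intro S_op_weighted_deriv_le[of g f z \<nu> \<mu> B]) (auto simp: g f)
  then show ?thesis
    by (simp add: mult_ac)
qed

lemma Hinf_weighted_deriv_S_op_le: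
  assumes f: "f \<in> Hinf \<nu>" and z: "z \<in> disc"
  shows "\<mu> z * norm (deriv (S_op g f) z) \<le> 4 * B * K * H_norm \<nu> f"
  using f dist_Cauchy_circle[OF z]
  by (intro S_op_weighted_deriv_bound[OF _ z]) (auto simp: Hinf_def intro: H_norm_upper)

lemma bounded_op_S_op_Hinf_Binf: "bounded_op (S_op g) (Hinf \<nu>) (H_norm \<nu>) (Binf \<mu>) (B_norm \<mu>)"
proof -
  have "S_op g f \<in> Binf \<mu> \<and> B_norm \<mu> (S_op g f) \<le> 4 * B * K * H_norm \<nu> f" if f: "f \<in> Hinf \<nu>" for f
  proof
    have "bdd_above ((\<lambda>z. \<mu> z * norm (deriv (S_op g f) z)) ` disc)"
      using Hinf_weighted_deriv_S_op_le[OF f] by (intro bdd_aboveI2)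
    then show "S_op g f \<in> Binf \<mu>"
      using f g by (simp add: Binf_def Hinf_def holomorphic_on_S_op)
    show "B_norm \<mu> (S_op g f) \<le> 4 * B * K * H_norm \<nu> f"
      using Hinf_weighted_deriv_S_op_le[OF f] by (rule B_norm_S_op_least)
  qed
  then show ?thesis
    unfolding bounded_op_def by blast
qed

lemma S_op_bound_constant_nonneg: "0 \<le> 4 * B * K"
proof -
  have "0 \<le> \<mu> 0 / ((1 - (norm (0::complex))\<^sup>2) * \<nu> 0) * norm (g 0)"
    using weight_nonneg[OF \<mu>, of 0] \<nu>_pos[rule_format, of 0] by simp
  then have "0 \<le> B"
    using bound[of 0] by simp
  moreover have "1 \<le> K"
    using doubling[of 0 0] \<nu>_pos by simp
  ultimately show ?thesis
    by simp
qed

lemma S_op_H0_in_B0: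
  assumes "f \<in> H0 \<nu>"
  shows "S_op g f \<in> B0 \<mu>"
proof -
  have f: "f holomorphic_on disc" and lim: "radial_lim0 (\<lambda>z. \<nu> z * norm (f z))"
    using assms by (auto simp: H0_def)
  have "radial_lim0 (\<lambda>z. \<mu> z * norm (deriv (S_op g f) z))"
    unfolding radial_lim0_def
  proof (intro allI impI)
    fix e :: real assume e: "e > 0"
    define \<delta> where "\<delta> = e / (4 * B * K + 1)"
    have \<delta>: "\<delta> > 0" "4 * B * K * \<delta> < e"
      using e S_op_bound_constant_nonneg by (auto simp: \<delta>_def field_simps)
    obtain r where "r < 1" and near: "\<forall>w. r < norm w \<and> norm w < 1 \<longrightarrow> \<bar>\<nu> w * norm (f w)\<bar> < \<delta>"
      using lim \<delta> unfolding radial_lim0_def by blast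
    \<comment> \<open>the Cauchy circle around \<open>z\<close> stays beyond \<open>(3 |z| - 1) / 2\<close>, which exceeds \<open>r\<close> when \<open>|z| > r'\<close>\<close>
    define r' where "r' = (1 + 2 * max r 0) / 3"
    have "\<bar>\<mu> z * norm (deriv (S_op g f) z)\<bar> < e" if z: "r' < norm z" "norm z < 1" for z
    proof -
      have "\<nu> w * norm (f w) \<le> \<delta>" if w: "dist z w = (1 - norm z) / 2" for w
      proof -
        have "r < norm w" "norm w < 1"
          using dist_Cauchy_circle[of z w] z w by (auto simp: r'_def)
        then show ?thesis
          using near by fastforce
      qed
      then have "\<mu> z * norm (deriv (S_op g f) z) \<le> 4 * B * K * \<delta>"
        using z by (intro S_op_weighted_deriv_bound[OF f]) auto
      moreover have "0 \<le> \<mu> z"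
        using z weight_nonneg[OF \<mu>] by simp
      ultimately show ?thesis
        using \<delta> by simp
    qed
    moreover have "r' < 1"
      using \<open>r < 1\<close> by (simp add: r'_def)
    ultimately show "\<exists>r<1. \<forall>z. r < norm z \<and> norm z < 1 \<longrightarrow> \<bar>\<mu> z * norm (deriv (S_op g f) z)\<bar> < e"
      by blast
  qed
  then show ?thesis
    using f g by (simp add: B0_def holomorphic_on_S_op)
qed

lemma bounded_op_S_op_H0_B0: "bounded_op (S_op g) (H0 \<nu>) (H_norm \<nu>) (B0 \<mu>) (B_norm \<mu>)"
  using bounded_op_S_op_Hinf_Binf H0_subset_Hinf[OF \<nu>] S_op_H0_in_B0
  unfolding bounded_op_def by blast

end

lemma bdd_imp_bounded_op_S_op:
  assumes g: "g holomorphic_on disc" and \<nu>: "is_weight \<nu>" and \<nu>_pos: "\<forall>z\<in>disc. \<nu> z > 0"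
    and U: "property_U \<nu>" and \<mu>: "is_weight \<mu>"
    and bdd: "bdd_above ((\<lambda>z. \<mu> z / ((1 - (norm z)\<^sup>2) * \<nu> z) * norm (g z)) ` disc)"
  shows "bounded_op (S_op g) (Hinf \<nu>) (H_norm \<nu>) (Binf \<mu>) (B_norm \<mu>)"
    and "bounded_op (S_op g) (H0 \<nu>) (H_norm \<nu>) (B0 \<mu>) (B_norm \<mu>)"
proof -
  obtain K where "\<And>z w. z \<in> disc \<Longrightarrow> w \<in> disc \<Longrightarrow> norm w \<le> (1 + norm z) / 2 \<Longrightarrow> \<nu> z \<le> K * \<nu> w"
    using property_U_doubling[OF \<nu> U] by blast
  moreover obtain B where "\<And>z. z \<in> disc \<Longrightarrow> \<mu> z / ((1 - (norm z)\<^sup>2) * \<nu> z) * norm (g z) \<le> B"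
    using bdd unfolding bdd_above_def by blast
  ultimately show "bounded_op (S_op g) (Hinf \<nu>) (H_norm \<nu>) (Binf \<mu>) (B_norm \<mu>)"
    and "bounded_op (S_op g) (H0 \<nu>) (H_norm \<nu>) (B0 \<mu>) (B_norm \<mu>)"
    using bounded_op_S_op_Hinf_Binf bounded_op_S_op_H0_B0 \<nu> \<nu>_pos \<mu> g by blast+
qed

section \<open>Necessity of the symbol condition\<close>

lemma pointwise_le_of_B_norm_S_op_le:
  assumes g: "g holomorphic_on disc" and \<nu>: "is_weight \<nu>"
    and S: "S_op g f \<in> Binf \<mu>" and C: "B_norm \<mu> (S_op g f) \<le> C * H_norm \<nu> f"
    and f: "f holomorphic_on disc" and L: "\<And>w. w \<in> disc \<Longrightarrow> \<nu> w * norm (f w) \<le> L"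
    and z: "z \<in> disc"
  shows "\<mu> z * norm (deriv f z) * norm (g z) \<le> max C 0 * L"
proof -
  have "bdd_above ((\<lambda>w. \<nu> w * norm (f w)) ` disc)"
    by (rule bdd_aboveI2) (rule L)
  then have "f \<in> Hinf \<nu>"
    using f by (simp add: Hinf_def)
  have "0 \<le> \<nu> 0 * norm (f 0)"
    using weight_nonneg[OF \<nu>, of 0] by simp
  also have "\<dots> \<le> H_norm \<nu> f"
    using \<open>f \<in> Hinf \<nu>\<close> by (rule H_norm_upper) simp
  finally have "0 \<le> H_norm \<nu> f" .
  have "\<mu> z * norm (deriv f z) * norm (g z) = \<mu> z * norm (deriv (S_op g f) z)"
    using f g z by (simp add: deriv_S_op norm_mult mult.assoc)
  also have "\<dots> \<le> B_norm \<mu> (S_op g f)"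
    using S z by (rule B_norm_upper)
  also have "\<dots> \<le> max C 0 * H_norm \<nu> f"
    using C \<open>0 \<le> H_norm \<nu> f\<close> by (meson max.cobounded1 mult_right_mono order_trans)
  also have "\<dots> \<le> max C 0 * L"
    using L by (intro mult_left_mono H_norm_least) auto
  finally show ?thesis .
qed

lemma bounded_op_S_op_imp_bdd:
  assumes g: "g holomorphic_on disc" and \<nu>: "is_weight \<nu>" and \<nu>_pos: "\<forall>z\<in>disc. \<nu> z > 0"
    and \<mu>: "is_weight \<mu>"
    and bounded: "bounded_op (S_op g) X (H_norm \<nu>) Y (B_norm \<mu>)" and Y: "Y \<subseteq> Binf \<mu>"
    and \<beta>: "\<beta> > 0" and L: "\<And>a z. a \<in> disc \<Longrightarrow> z \<in> disc \<Longrightarrow> \<nu> z * norm (test_fun \<nu> \<beta> a z) \<le> L"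
    and tests: "\<And>a. a \<in> disc \<Longrightarrow> test_fun \<nu> \<beta> a \<in> X" and identity: "(\<lambda>z. z) \<in> X"
  shows "bdd_above ((\<lambda>z. \<mu> z / ((1 - (norm z)\<^sup>2) * \<nu> z) * norm (g z)) ` disc)"
proof -
  obtain C where S: "\<forall>f\<in>X. S_op g f \<in> Y" and C: "\<forall>f\<in>X. B_norm \<mu> (S_op g f) \<le> C * H_norm \<nu> f"
    using bounded unfolding bounded_op_def by blast
  have pointwise: "\<mu> z * norm (deriv f z) * norm (g z) \<le> max C 0 * L"
    if "f \<in> X" "f holomorphic_on disc" "\<And>w. w \<in> disc \<Longrightarrow> \<nu> w * norm (f w) \<le> L" "z \<in> disc"
    for f L z
    using pointwise_le_of_B_norm_S_op_le[OF g \<nu> _ _ that(2-4)] S C Y that(1) by blast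
  define ratio where "ratio z = \<mu> z / ((1 - (norm z)\<^sup>2) * \<nu> z) * norm (g z)" for z
  define h :: complex where "h = 1 / 2"
  have weight_pos: "0 < (1 - (norm a)\<^sup>2) * \<nu> a" if "a \<in> disc" for a
    using that \<nu>_pos by (simp add: abs_square_less_1)
  have ratio_nonneg: "0 \<le> ratio a" if "a \<in> disc" for a
    using weight_pos[OF that] weight_nonneg[OF \<mu> that] by (simp add: ratio_def)
  have near_boundary: "ratio a \<le> 2 * max C 0 * L" if a: "a \<in> disc" and "1 / 2 \<le> norm a" for a
  proof -
    have "\<nu> a > 0"
      using \<nu>_pos a by simp
    then have "ratio a * (\<beta> * norm a) = \<mu> a * norm (deriv (test_fun \<nu> \<beta> a) a) * norm (g a)"
      by (simp add: ratio_def norm_deriv_test_fun_at_center[OF a] mult.commute mult.left_commute)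
    also have "\<dots> \<le> max C 0 * L"
      using pointwise[OF tests[OF a] test_fun_holomorphic[OF a] L[OF a] a] .
    finally have "ratio a * (\<beta> * norm a) \<le> max C 0 * L" .
    moreover have "1 * norm a \<le> \<beta> * norm a"
      using \<beta> by (intro mult_right_mono) auto
    then have "1 / 2 \<le> \<beta> * norm a"
      using \<open>1 / 2 \<le> norm a\<close> by simp
    then have "ratio a * (1 / 2) \<le> ratio a * (\<beta> * norm a)"
      using ratio_nonneg[OF a] by (rule mult_left_mono)
    ultimately show ?thesis
      by simp
  qed
  have near_origin: "ratio a \<le> max C 0 * \<nu> 0 / (3 / 4 * \<nu> h)" if a: "a \<in> disc" and "norm a \<le> 1 / 2" for a
  proof -
    have "\<nu> w * norm w \<le> \<nu> 0" if "w \<in> disc" for w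
    proof -
      have "\<nu> w * norm w \<le> \<nu> w"
        using that weight_nonneg[OF \<nu> that] by (intro mult_left_le) auto
      then show ?thesis
        using weight_le_weight_0[OF \<nu> that] by linarith
    qed
    from pointwise[OF identity holomorphic_on_ident this a]
    have "\<mu> a * norm (g a) \<le> max C 0 * \<nu> 0"
      by simp
    moreover have "3 / 4 * \<nu> h \<le> (1 - (norm a)\<^sup>2) * \<nu> a"
    proof (rule mult_mono)
      show "3 / 4 \<le> 1 - (norm a)\<^sup>2"
        using power_mono[OF \<open>norm a \<le> 1 / 2\<close>, of 2] by (simp add: power2_eq_square)
      show "\<nu> h \<le> \<nu> a"
        using weight_antimono[OF \<nu> a, of h] \<open>norm a \<le> 1 / 2\<close> by (simp add: h_def)
    qed (use a weight_nonneg[OF \<nu>, of h] in \<open>auto simp: h_def abs_square_le_1\<close>)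
    moreover have "0 < \<nu> h"
      using \<nu>_pos by (simp add: h_def)
    ultimately have "\<mu> a * norm (g a) / ((1 - (norm a)\<^sup>2) * \<nu> a) \<le> max C 0 * \<nu> 0 / (3 / 4 * \<nu> h)"
      using weight_nonneg[OF \<nu>, of 0] by (intro frac_le) auto
    then show ?thesis
      by (simp add: ratio_def)
  qed
  have "ratio a \<le> max (2 * max C 0 * L) (max C 0 * \<nu> 0 / (3 / 4 * \<nu> h))" if "a \<in> disc" for a
    using near_boundary[OF that] near_origin[OF that] by fastforce
  then show ?thesis
    unfolding ratio_def by (rule bdd_aboveI2)
qed

theorem theorem5:
  fixes g :: "complex \<Rightarrow> complex" and \<nu> \<mu> :: "complex \<Rightarrow> real"
  assumes "g holomorphic_on disc"
    and "is_weight \<nu>" and "\<forall>z\<in>disc. \<nu> z > 0" and "property_U \<nu>"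
    and "is_weight \<mu>"
  shows "(bounded_op (S_op g) (Hinf \<nu>) (H_norm \<nu>) (Binf \<mu>) (B_norm \<mu>)
           \<longleftrightarrow> bdd_above ((\<lambda>z. \<mu> z / ((1 - (norm z)\<^sup>2) * \<nu> z) * norm (g z)) ` disc))
       \<and> (typical_weight \<nu> \<and> typical_weight \<mu> \<longrightarrow>
           (bounded_op (S_op g) (Hinf \<nu>) (H_norm \<nu>) (Binf \<mu>) (B_norm \<mu>)
            \<longleftrightarrow> bounded_op (S_op g) (H0 \<nu>) (H_norm \<nu>) (B0 \<mu>) (B_norm \<mu>)))"
proof -
  note g = assms(1) and \<nu> = assms(2) and \<nu>_pos = assms(3) and \<mu> = assms(5)
  obtain \<beta> L where \<beta>: "\<beta> > 0"
    and L: "\<And>a z. a \<in> disc \<Longrightarrow> z \<in> disc \<Longrightarrow> \<nu> z * norm (test_fun \<nu> \<beta> a z) \<le> L"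
    using test_fun_weighted_bound[OF \<nu> \<nu>_pos assms(4)] by blast
  let ?bdd = "bdd_above ((\<lambda>z. \<mu> z / ((1 - (norm z)\<^sup>2) * \<nu> z) * norm (g z)) ` disc)"
  have nec_Hinf: ?bdd if "bounded_op (S_op g) (Hinf \<nu>) (H_norm \<nu>) (Binf \<mu>) (B_norm \<mu>)"
    by (rule bounded_op_S_op_imp_bdd[OF g \<nu> \<nu>_pos \<mu> that order_refl \<beta>])
      (use L \<nu>_pos in \<open>auto intro: test_fun_in_Hinf[OF \<nu>] ident_in_Hinf[OF \<nu>]\<close>)
  have nec_H0: ?bdd if "radial_lim0 \<nu>" "bounded_op (S_op g) (H0 \<nu>) (H_norm \<nu>) (B0 \<mu>) (B_norm \<mu>)"
    by (rule bounded_op_S_op_imp_bdd[OF g \<nu> \<nu>_pos \<mu> that(2) B0_subset_Binf[OF \<mu>] \<beta>])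
      (use L \<nu>_pos that(1) in \<open>auto intro: test_fun_in_H0[OF \<nu>] ident_in_H0[OF \<nu>]\<close>)
  note suff = bdd_imp_bounded_op_S_op[OF g \<nu> \<nu>_pos assms(4) \<mu>]
  have Hinf_iff: "bounded_op (S_op g) (Hinf \<nu>) (H_norm \<nu>) (Binf \<mu>) (B_norm \<mu>) \<longleftrightarrow> ?bdd"
    using nec_Hinf suff(1) by (rule iffI)
  moreover have "bounded_op (S_op g) (Hinf \<nu>) (H_norm \<nu>) (Binf \<mu>) (B_norm \<mu>)
      \<longleftrightarrow> bounded_op (S_op g) (H0 \<nu>) (H_norm \<nu>) (B0 \<mu>) (B_norm \<mu>)" if "typical_weight \<nu>"
    using that Hinf_iff nec_H0 suff(2) unfolding typical_weight_def by metis
  ultimately show ?thesis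
    by metis
qed

end
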